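(* Let $G$ be a group, $\Lambda$ an ordered abelian group, $\delta\in\Lambda$, $\delta\geqslant0$, and $l:G\to\Lambda$ a $\delta$-hyperbolic length function. For every $k\in\mathbb{N}$: if $l$ satisfies $(R1,k)$ then it satisfies $(R2,k+1)$; and if $l$ satisfies $(R2,k)$ then it satisfies $(R1,k)$.
   Context: $\Lambda_{\mathbb{Q}}$ is the ordered divisible hull of $\Lambda$, containing $\Lambda$. A length function on $G$ is $l:G\to\Lambda$ with $l(g)\geqslant0$, $l(1)=0$, $l(g)=l(g^{-1})$, $l(gh)\leqslant l(g)+l(h)$. Let $c(g,h)=\tfrac12(l(g)+l(h)-l(g^{-1}h))\in\Lambda_{\mathbb{Q}}$; $l$ is $\delta$-hyperbolic if $c(f,g)\geqslant\min\{c(f,h),c(g,h)\}-\delta$ for all $f,g,h$. For $\alpha\in\Lambda$ and $g,u,g_1\in G$, write $g=u\circ_\alpha g_1$ if $g=ug_1$ and $c(u^{-1},g_1)\leqslant\alpha$. $(R1,k)$: for all $g,h\in G$ there exist $u,g_1,h_1\in G$ with $g=u\circ_{k\delta}g_1$, $h=u\circ_{k\delta}h_1$ and $g^{-1}h=g_1^{-1}\circ_{k\delta}h_1$. $(R2,k)$: for all $g,h\in G$ there exists $u\in G$ with $l(u)\leqslant c(g,h)+k\delta$, $l(u^{-1}g)\leqslant c(g^{-1},g^{-1}h)+k\delta$ and $l(u^{-1}h)\leqslant c(h^{-1},h^{-1}g)+k\delta$. *)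

theory Defs
  imports Main
begin

(* The group G is written additively as a (not necessarily commutative) type of
   class group_add: g + h is the product gh, -g the inverse, 0 the identity. *)

fun nsmul :: "nat \<Rightarrow> 'b::monoid_add \<Rightarrow> 'b" where
  "nsmul 0 x = 0"
| "nsmul (Suc n) x = x + nsmul n x"

definition length_function :: "('a::group_add \<Rightarrow> 'b::linordered_ab_group_add) \<Rightarrow> bool" where
  "length_function l \<longleftrightarrow>
     (\<forall>g. 0 \<le> l g) \<and> l 0 = 0 \<and> (\<forall>g. l g = l (- g)) \<and>
     (\<forall>g h. l (g + h) \<le> l g + l h)"

(* gp2 l g h = 2 * c(g,h) = l(g) + l(h) - l(g^{-1} h), an element of Lambda.
   All statements about c (which lives in Lambda_Q) are expressed by doubling,
   which is an order embedding Lambda_Q -> Lambda_Q. *)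
definition gp2 :: "('a::group_add \<Rightarrow> 'b::linordered_ab_group_add) \<Rightarrow> 'a \<Rightarrow> 'a \<Rightarrow> 'b" where
  "gp2 l g h = l g + l h - l (- g + h)"

definition hyperbolic :: "('a::group_add \<Rightarrow> 'b::linordered_ab_group_add) \<Rightarrow> 'b \<Rightarrow> bool" where
  "hyperbolic l \<delta> \<longleftrightarrow>
     (\<forall>f g h. gp2 l f g \<ge> min (gp2 l f h) (gp2 l g h) - (\<delta> + \<delta>))"

(* g = u o_alpha g1 :  g = u g1  and  c(u^{-1}, g1) <= alpha *)
definition red_prod :: "('a::group_add \<Rightarrow> 'b::linordered_ab_group_add) \<Rightarrow> 'a \<Rightarrow> 'a \<Rightarrow> 'b \<Rightarrow> 'a \<Rightarrow> bool" where
  "red_prod l g u \<alpha> g1 \<longleftrightarrow> g = u + g1 \<and> gp2 l (- u) g1 \<le> \<alpha> + \<alpha>"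

definition R1 :: "('a::group_add \<Rightarrow> 'b::linordered_ab_group_add) \<Rightarrow> 'b \<Rightarrow> nat \<Rightarrow> bool" where
  "R1 l \<delta> k \<longleftrightarrow> (\<forall>g h. \<exists>u g1 h1.
      red_prod l g u (nsmul k \<delta>) g1 \<and>
      red_prod l h u (nsmul k \<delta>) h1 \<and>
      red_prod l (- g + h) (- g1) (nsmul k \<delta>) h1)"

definition R2 :: "('a::group_add \<Rightarrow> 'b::linordered_ab_group_add) \<Rightarrow> 'b \<Rightarrow> nat \<Rightarrow> bool" where
  "R2 l \<delta> k \<longleftrightarrow> (\<forall>g h. \<exists>u.
      l u + l u \<le> gp2 l g h + (nsmul k \<delta> + nsmul k \<delta>) \<and>
      l (- u + g) + l (- u + g) \<le> gp2 l (- g) (- g + h) + (nsmul k \<delta> + nsmul k \<delta>) \<and>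
      l (- u + h) + l (- u + h) \<le> gp2 l (- h) (- h + g) + (nsmul k \<delta> + nsmul k \<delta>))"

end

theory Submission
  imports Defs
begin

(* View l as the left-invariant distance d(x, y) = l(-x + y), so that the vertices 1, g, h
   form a triangle whose Gromov products at 1, g, h are c(g,h), c(g^-1, g^-1 h) and
   c(h^-1, h^-1 g).  A decomposition g = u o g1, h = u o h1, g^-1 h = g1^-1 o h1 is a
   tripod with centre u and legs of lengths l u, l g1, l h1.
   (R2 => R1): the Gromov products at the two ends of a side add up to its length, so adding
   two of the bounds of (R2) shows that the corresponding leg decomposition is reduced.
   (R1 => R2): a common reduced prefix u of two elements has length at most their Gromov
   product with u; hyperbolicity then bounds l u by c(g,h) at the cost of one more delta.
   Translating by g^-1 and h^-1 handles the other two vertices. *)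

lemma double_le_double_iff:
  fixes x y :: "'b::linordered_ab_group_add"
  shows "x + x \<le> y + y \<longleftrightarrow> x \<le> y"
proof -
  have "x + x \<le> y + y \<longleftrightarrow> (x - y) + (x - y) \<le> 0"
    by (simp add: algebra_simps)
  also have "\<dots> \<longleftrightarrow> x \<le> y"
    by simp
  finally show ?thesis .
qed

lemma length_function_minus:
  assumes "length_function l"
  shows "l (- g) = l g"
  using assms unfolding length_function_def by metis

lemma gp2_commute:
  assumes "length_function l"
  shows "gp2 l g h = gp2 l h g"
proof -
  have "l (- g + h) = l (- h + g)"
    using length_function_minus[OF assms, of "- h + g"] by (simp add: minus_add)
  then show ?thesis
    unfolding gp2_def by (simp add: add.commute)
qed

lemma gp2_minus_left:
  assumes "length_function l"
  shows "gp2 l (- u) v = l u + l v - l (u + v)"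
  unfolding gp2_def by (simp add: length_function_minus[OF assms])

lemma gp2_add_gp2_at_neighbour:
  assumes "length_function l"
  shows "gp2 l g h + gp2 l (- g) (- g + h) = l g + l g"
  unfolding gp2_def by (simp add: length_function_minus[OF assms] add.assoc[symmetric])

lemma red_prod_minus:
  assumes "length_function l" and "red_prod l g u \<alpha> v"
  shows "red_prod l (- g) (- v) \<alpha> (- u)"
  using assms(2) unfolding red_prod_def
  by (simp add: minus_add gp2_commute[OF assms(1), of v])

lemma red_prod_le_gp2:
  assumes "length_function l" and "red_prod l g u \<alpha> v"
  shows "l u + l u \<le> gp2 l g u + (\<alpha> + \<alpha>)"
proof -
  from assms(2) have g: "g = u + v" and bound: "l u + l v - l g \<le> \<alpha> + \<alpha>"
    unfolding red_prod_def gp2_minus_left[OF assms(1)] by auto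
  have "- g + u = - v"
    unfolding g by (simp add: minus_add add.assoc)
  then have "gp2 l g u = l g + l u - l v"
    unfolding gp2_def by (simp add: length_function_minus[OF assms(1)])
  then have "l u + l u = (l u + l v - l g) + gp2 l g u"
    by (simp add: algebra_simps)
  also have "\<dots> \<le> (\<alpha> + \<alpha>) + gp2 l g u"
    using bound by (rule add_right_mono)
  finally show ?thesis
    by (simp add: add.commute)
qed

lemma hyperbolic_common_prefix_le_gp2:
  assumes "length_function l" and "hyperbolic l \<delta>"
    and "red_prod l g u \<alpha> v" and "red_prod l h u \<alpha> w"
  shows "l u + l u \<le> gp2 l g h + ((\<delta> + \<alpha>) + (\<delta> + \<alpha>))"
proof -
  have "l u + l u - (\<alpha> + \<alpha>) \<le> min (gp2 l g u) (gp2 l h u)"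
    using red_prod_le_gp2[OF assms(1,3)] red_prod_le_gp2[OF assms(1,4)]
    by (simp add: algebra_simps)
  also have "\<dots> \<le> gp2 l g h + (\<delta> + \<delta>)"
    using assms(2) unfolding hyperbolic_def by (simp add: algebra_simps)
  finally show ?thesis
    by (simp add: algebra_simps)
qed

lemma red_prod_of_doubled_bounds:
  assumes "length_function l"
    and "l u + l u \<le> a + (K + K)" and "l v + l v \<le> b + (K + K)"
    and "a + b = l (u + v) + l (u + v)"
  shows "red_prod l (u + v) u K v"
proof -
  have "(l u + l v - l (u + v)) + (l u + l v - l (u + v)) \<le> (K + K) + (K + K)"
    using add_mono[OF assms(2,3)] assms(4) by (simp add: algebra_simps)
  then show ?thesis
    unfolding red_prod_def gp2_minus_left[OF assms(1)] double_le_double_iff by simp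
qed

lemma R1_imp_R2_Suc:
  assumes lf: "length_function l" and hyp: "hyperbolic l \<delta>" and "R1 l \<delta> k"
  shows "R2 l \<delta> (Suc k)"
  unfolding R2_def
proof (intro allI)
  fix g h
  define K where "K = nsmul k \<delta>"
  from \<open>R1 l \<delta> k\<close> obtain u v w where
    rg: "red_prod l g u K v" and rh: "red_prod l h u K w" and
    rgh: "red_prod l (- g + h) (- v) K w"
    unfolding R1_def K_def by blast
  have v: "- u + g = v" and w: "- u + h = w"
    using rg rh unfolding red_prod_def by (auto simp: add.assoc[symmetric])
  have rhg: "red_prod l (- h + g) (- w) K v"
    using red_prod_minus[OF lf rgh] by (simp add: minus_add)
  have "l u + l u \<le> gp2 l g h + ((\<delta> + K) + (\<delta> + K))"
    using hyperbolic_common_prefix_le_gp2[OF lf hyp rg rh] .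
  moreover have "l v + l v \<le> gp2 l (- g) (- g + h) + ((\<delta> + K) + (\<delta> + K))"
    using hyperbolic_common_prefix_le_gp2[OF lf hyp red_prod_minus[OF lf rg] rgh]
    by (simp add: length_function_minus[OF lf])
  moreover have "l w + l w \<le> gp2 l (- h) (- h + g) + ((\<delta> + K) + (\<delta> + K))"
    using hyperbolic_common_prefix_le_gp2[OF lf hyp red_prod_minus[OF lf rh] rhg]
    by (simp add: length_function_minus[OF lf])
  ultimately show "\<exists>u. l u + l u \<le> gp2 l g h + (nsmul (Suc k) \<delta> + nsmul (Suc k) \<delta>) \<and>
      l (- u + g) + l (- u + g) \<le> gp2 l (- g) (- g + h) + (nsmul (Suc k) \<delta> + nsmul (Suc k) \<delta>) \<and>
      l (- u + h) + l (- u + h) \<le> gp2 l (- h) (- h + g) + (nsmul (Suc k) \<delta> + nsmul (Suc k) \<delta>)"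
    unfolding K_def by (intro exI[of _ u]) (simp add: v w)
qed

lemma R2_imp_R1:
  assumes lf: "length_function l" and "R2 l \<delta> k"
  shows "R1 l \<delta> k"
  unfolding R1_def
proof (intro allI)
  fix g h
  define K where "K = nsmul k \<delta>"
  from \<open>R2 l \<delta> k\<close> obtain u where
    u: "l u + l u \<le> gp2 l g h + (K + K)" and
    v: "l (- u + g) + l (- u + g) \<le> gp2 l (- g) (- g + h) + (K + K)" and
    w: "l (- u + h) + l (- u + h) \<le> gp2 l (- h) (- h + g) + (K + K)"
    unfolding R2_def K_def by blast
  have gh: "- (- u + g) + (- u + h) = - g + h"
    by (simp add: minus_add add.assoc)
  have "red_prod l g u K (- u + g)"
    using red_prod_of_doubled_bounds[OF lf u v] gp2_add_gp2_at_neighbour[OF lf] by simp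
  moreover have "red_prod l h u K (- u + h)"
    using red_prod_of_doubled_bounds[OF lf u w] gp2_add_gp2_at_neighbour[OF lf, of h g]
    by (simp add: gp2_commute[OF lf, of h])
  moreover have "red_prod l (- g + h) (- (- u + g)) K (- u + h)"
    unfolding gh[symmetric]
  proof (rule red_prod_of_doubled_bounds[OF lf _ w])
    show "l (- (- u + g)) + l (- (- u + g)) \<le> gp2 l (- g) (- g + h) + (K + K)"
      using v by (simp add: length_function_minus[OF lf])
    show "gp2 l (- g) (- g + h) + gp2 l (- h) (- h + g) =
        l (- (- u + g) + (- u + h)) + l (- (- u + g) + (- u + h))"
      using gp2_add_gp2_at_neighbour[OF lf, of "- g + h" "- g"]
      by (simp add: gh gp2_commute[OF lf] minus_add add.assoc)
  qed
  ultimately show "\<exists>u v w. red_prod l g u (nsmul k \<delta>) v \<and> red_prod l h u (nsmul k \<delta>) w \<and>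
      red_prod l (- g + h) (- v) (nsmul k \<delta>) w"
    unfolding K_def by blast
qed

theorem mainTheorem13:
  fixes l :: "'a::group_add \<Rightarrow> 'b::linordered_ab_group_add" and \<delta> :: 'b and k :: nat
  assumes "0 \<le> \<delta>" and "length_function l" and "hyperbolic l \<delta>"
  shows "(R1 l \<delta> k \<longrightarrow> R2 l \<delta> (k + 1)) \<and> (R2 l \<delta> k \<longrightarrow> R1 l \<delta> k)"
  using R1_imp_R2_Suc[OF assms(2,3)] R2_imp_R1[OF assms(2)] by simp

end
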